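(* Let $p,\mu>1$, $\varepsilon>0$, and let $\rho:[0,\infty)\to[2-\mu,p]$ be continuous and decreasing with $\rho(0)=p$ and $\lim_{r\to\infty}\rho(r)=2-\mu$. Define $$G(\xi):=\int_0^{|\xi|}\int_0^s(\varepsilon+r)^{\rho(r)-2}\,\mathrm{d}r\,\mathrm{d}s,\quad\xi\in\mathbb{R}^2.$$ Then there are constants $c_5,c_6>0$ with $$c_5(1+|\xi|)^{-\mu}|\eta|^2\le D^2G(\xi)(\eta,\eta)\le c_6(1+|\xi|)^{p-2}|\eta|^2\quad\text{for all }\xi,\eta\in\mathbb{R}^2,$$ and there is a constant $c_{49}$ with $|D^2G(\xi)|\,|\xi|^2\le c_{49}(G(\xi)+1)$ for all $\xi\in\mathbb{R}^2$. *)

theory Defs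
  imports "HOL-Analysis.Analysis"
begin

definition Gfun :: "real \<Rightarrow> (real \<Rightarrow> real) \<Rightarrow> real^2 \<Rightarrow> real" where
  "Gfun \<epsilon> \<rho> \<xi> =
     integral {0..norm \<xi>} (\<lambda>s. integral {0..s} (\<lambda>r. (\<epsilon> + r) powr (\<rho> r - 2)))"

end

theory Submission
  imports Defs
begin

text \<open>\<open>G\<close> is radial: \<open>G \<xi> = \<psi> (norm \<xi>)\<close> with \<open>\<psi>'' = f\<close> for
  \<open>f r = (\<epsilon> + r) powr (\<rho> r - 2)\<close>. Its Hessian at \<open>\<xi>\<close> acts as \<open>f t\<close> in the
  direction of \<open>\<xi>\<close> and as the mean \<open>\<phi> t / t\<close> of \<open>f\<close> over \<open>[0, t]\<close> on the
  orthogonal complement, \<open>t = norm \<xi>\<close>; both lie between multiples of \<open>(1 + t) powr - \<mu>\<close>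
  and \<open>(1 + t) powr (p - 2)\<close> because \<open>\<rho>\<close> takes values in \<open>[2 - \<mu>, p]\<close>.
  For the growth bound, monotonicity of \<open>\<rho>\<close> makes \<open>f\<close> a doubling function for large
  arguments, so \<open>t * f t\<close> and \<open>\<phi> t\<close> are controlled by \<open>\<phi> (t / 2)\<close>, while
  \<open>t * \<phi> (t / 2) \<le> 2 * \<psi> t\<close>.\<close>

lemma integral_ge_const_real:
  fixes g :: "real \<Rightarrow> real"
  assumes "a \<le> b" "g integrable_on {a..b}" "\<And>x. x \<in> {a..b} \<Longrightarrow> c \<le> g x"
  shows "(b - a) * c \<le> integral {a..b} g"
proof -
  have "integral {a..b} (\<lambda>_. c) \<le> integral {a..b} g"
    by (rule integral_le) (use assms in auto)
  then show ?thesis using assms(1) by simp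
qed

lemma integral_le_const_real:
  fixes g :: "real \<Rightarrow> real"
  assumes "a \<le> b" "g integrable_on {a..b}" "\<And>x. x \<in> {a..b} \<Longrightarrow> g x \<le> c"
  shows "integral {a..b} g \<le> (b - a) * c"
proof -
  have "integral {a..b} g \<le> integral {a..b} (\<lambda>_. c)"
    by (rule integral_le) (use assms in auto)
  then show ?thesis using assms(1) by simp
qed

lemma integral_from_0_has_real_derivative:
  fixes g :: "real \<Rightarrow> real"
  assumes g: "continuous_on {0..} g" and t: "0 \<le> t"
  shows "((\<lambda>s. integral {0..s} g) has_real_derivative g t) (at t within {0..})"
proof -
  have "continuous_on {0..t+1} g" using g by (rule continuous_on_subset) auto
  then have "((\<lambda>s. integral {0..s} g) has_real_derivative g t) (at t within {0..t+1})"
    by (rule integral_has_real_derivative) (use t in auto)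
  moreover have "at t within {0..t+1} = at t within {0..}"
    by (rule at_within_nhd[of _ "{..<t+1}"]) auto
  ultimately show ?thesis by simp
qed

lemma tendsto_at_0_comp_norm_quotient:
  fixes g :: "real \<Rightarrow> real"
  assumes "((\<lambda>t. g t / t) \<longlongrightarrow> L) (at 0 within {0..})"
  shows "((\<lambda>x::'a::real_normed_vector. g (norm x) / norm x) \<longlongrightarrow> L) (at 0)"
proof -
  have "filterlim norm (at 0 within {0..}) (at (0::'a))"
  proof (subst filterlim_at, intro conjI)
    show "(norm \<longlongrightarrow> 0) (at (0::'a))"
      using tendsto_norm[OF tendsto_ident_at[of "0::'a" UNIV]] by simp
    show "\<forall>\<^sub>F x in at (0::'a). norm x \<in> {0..} \<and> norm x \<noteq> 0"
      by (simp add: eventually_at_filter)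
  qed
  from filterlim_compose[OF assms this] show ?thesis by simp
qed

lemma blinfun_inner_left_0 [simp]: "blinfun_inner_left 0 = 0"
  by (rule blinfun_eqI) simp

lemma norm_blinfun_inner_left_le: "norm (blinfun_inner_left x) \<le> norm x"
  by (rule norm_blinfun_bound) (auto simp: Cauchy_Schwarz_ineq2 mult.commute)

locale radial_profile =
  fixes f :: "real \<Rightarrow> real"
  assumes continuous_f: "continuous_on {0..} f"
begin

definition phi :: "real \<Rightarrow> real" where "phi s = integral {0..s} f"
definition psi :: "real \<Rightarrow> real" where "psi t = integral {0..t} phi"
definition mean :: "real \<Rightarrow> real" where "mean t = (if t = 0 then f 0 else phi t / t)"
definition rank_one_coeff :: "real \<Rightarrow> real" where
  "rank_one_coeff t = (if t = 0 then 0 else (f t - mean t) / t^2)"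

lemma phi_0 [simp]: "phi 0 = 0" and psi_0 [simp]: "psi 0 = 0"
  by (simp_all add: phi_def psi_def)

lemma phi_has_derivative: "0 \<le> t \<Longrightarrow> (phi has_real_derivative f t) (at t within {0..})"
  unfolding phi_def by (rule integral_from_0_has_real_derivative[OF continuous_f])

lemma continuous_on_phi: "continuous_on {0..} phi"
  by (rule DERIV_continuous_on) (auto intro: phi_has_derivative)

lemma psi_has_derivative: "0 \<le> t \<Longrightarrow> (psi has_real_derivative phi t) (at t within {0..})"
  unfolding psi_def by (rule integral_from_0_has_real_derivative[OF continuous_on_phi])

lemma at_within_nonneg_eq_at: "0 < t \<Longrightarrow> at t within {0..} = at (t::real)"
  by (rule at_within_interior) simp

lemma mean_has_derivative:
  assumes t: "0 < t"
  shows "(mean has_real_derivative (f t - mean t) / t) (at t)"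
proof -
  have "(phi has_real_derivative f t) (at t)"
    using phi_has_derivative[of t] t by (simp add: at_within_nonneg_eq_at)
  then have "((\<lambda>s. phi s / s) has_real_derivative (f t * t - phi t * 1) / (t * t)) (at t)"
    by (rule DERIV_divide[OF _ DERIV_ident]) (use t in simp)
  also have "(f t * t - phi t * 1) / (t * t) = (f t - mean t) / t"
    using t by (simp add: mean_def field_simps)
  finally show ?thesis
    by (rule has_field_derivative_transform_within_open[where S="{0<..}"])
       (use t in \<open>auto simp: mean_def\<close>)
qed

lemma tendsto_mean_norm: "((\<lambda>x::'a::real_normed_vector. mean (norm x)) \<longlongrightarrow> f 0) (at 0)"
proof -
  have "((\<lambda>t. phi t / t) \<longlongrightarrow> f 0) (at 0 within {0..})"
    using phi_has_derivative[of 0] by (simp add: has_field_derivative_iff)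
  then have "((\<lambda>x::'a. phi (norm x) / norm x) \<longlongrightarrow> f 0) (at 0)"
    by (rule tendsto_at_0_comp_norm_quotient)
  moreover have "\<forall>\<^sub>F x in at (0::'a). phi (norm x) / norm x = mean (norm x)"
    by (simp add: eventually_at_filter mean_def)
  ultimately show ?thesis by (rule Lim_transform_eventually)
qed

lemma tendsto_psi_norm_quotient: "((\<lambda>x::'a::real_normed_vector. psi (norm x) / norm x) \<longlongrightarrow> 0) (at 0)"
  using psi_has_derivative[of 0]
  by (intro tendsto_at_0_comp_norm_quotient) (simp add: has_field_derivative_iff)

definition grad :: "'a::real_inner \<Rightarrow> ('a \<Rightarrow>\<^sub>L real)" where
  "grad x = mean (norm x) *\<^sub>R blinfun_inner_left x"

text \<open>Differentiating \<open>mean (norm x) *\<^sub>R x\<close> gives \<open>mean I + mean' (norm x) x x\<^sup>T / norm x\<close>,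
  and \<open>mean' t = (f t - mean t) / t\<close>.\<close>
definition hess :: "'a::real_inner \<Rightarrow> ('a \<Rightarrow>\<^sub>L ('a \<Rightarrow>\<^sub>L real))" where
  "hess x = Blinfun (\<lambda>h. mean (norm x) *\<^sub>R blinfun_inner_left h
                         + (rank_one_coeff (norm x) * (h \<bullet> x)) *\<^sub>R blinfun_inner_left x)"

lemma hess_apply:
  "blinfun_apply (hess x) h
     = mean (norm x) *\<^sub>R blinfun_inner_left h
       + (rank_one_coeff (norm x) * (h \<bullet> x)) *\<^sub>R blinfun_inner_left x"
proof -
  have "bounded_linear (\<lambda>h. mean (norm x) *\<^sub>R blinfun_inner_left h
                         + (rank_one_coeff (norm x) * (h \<bullet> x)) *\<^sub>R blinfun_inner_left x)"
    by (auto intro!: bounded_linear_intros)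
  then show ?thesis by (simp add: hess_def bounded_linear_Blinfun_apply)
qed

lemma hess_apply_apply:
  "blinfun_apply (blinfun_apply (hess x) h) z
     = mean (norm x) * (z \<bullet> h) + rank_one_coeff (norm x) * (h \<bullet> x) * (z \<bullet> x)"
  by (simp add: hess_apply blinfun.add_left blinfun.scaleR_left)

lemma grad_0 [simp]: "grad 0 = 0"
  by (simp add: grad_def)

lemma psi_norm_has_derivative: "((\<lambda>x. psi (norm x)) has_derivative blinfun_apply (grad x)) (at x)"
proof (cases "x = 0")
  case False
  define t where "t = norm x"
  have t: "0 < t" using False t_def by simp
  have "(psi has_real_derivative phi t) (at (norm x))"
    using psi_has_derivative[of t] t by (simp add: at_within_nonneg_eq_at t_def)
  then have "(psi has_derivative (\<lambda>y. phi t * y)) (at (norm x))"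
    by (simp add: has_field_derivative_def)
  from has_derivative_compose[OF has_derivative_norm[OF False] this]
  have "((\<lambda>x. psi (norm x)) has_derivative (\<lambda>h. phi t * (h \<bullet> sgn x))) (at x)"
    by simp
  moreover have "phi t * (h \<bullet> sgn x) = blinfun_apply (grad x) h" for h
    using t
    by (simp add: grad_def mean_def t_def[symmetric] sgn_div_norm field_simps blinfun.scaleR_left)
  ultimately show ?thesis by simp
next
  case True
  have "(1 / norm (y - 0)) *\<^sub>R (psi (norm y) - (psi (norm 0) + blinfun_apply (grad 0) (y - 0)))
          = psi (norm y) / norm y" for y :: 'a
    by simp
  then show ?thesis
    using True tendsto_psi_norm_quotient
    by (simp add: has_derivative_within blinfun.bounded_linear_right)
qed

lemma grad_has_derivative_nonzero:
  assumes "x \<noteq> 0"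
  shows "(grad has_derivative blinfun_apply (hess x)) (at x)"
proof -
  define t where "t = norm x"
  have t: "0 < t" using assms t_def by simp
  have "(mean has_derivative (\<lambda>y. (f t - mean t) / t * y)) (at (norm x))"
    using mean_has_derivative[OF t] unfolding has_field_derivative_def t_def .
  from has_derivative_compose[OF has_derivative_norm[OF assms] this]
  have mean_norm: "((\<lambda>y. mean (norm y)) has_derivative (\<lambda>h. (f t - mean t) / t * (h \<bullet> sgn x))) (at x)"
    by simp
  have "(blinfun_inner_left has_derivative blinfun_inner_left) (at x)"
    by (rule bounded_linear_imp_has_derivative[OF bounded_linear_blinfun_inner_left])
  from has_derivative_scaleR[OF mean_norm this]
  have "(grad has_derivative (\<lambda>h. mean (norm x) *\<^sub>R blinfun_inner_left h
          + ((f t - mean t) / t * (h \<bullet> sgn x)) *\<^sub>R blinfun_inner_left x)) (at x)"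
    by (simp add: grad_def[abs_def])
  moreover have "(f t - mean t) / t * (h \<bullet> sgn x) = rank_one_coeff (norm x) * (h \<bullet> x)" for h
    using t
    by (simp add: t_def[symmetric] rank_one_coeff_def sgn_div_norm power2_eq_square field_simps)
  ultimately have "(grad has_derivative (\<lambda>h. blinfun_apply (hess x) h)) (at x)"
    by (simp add: hess_apply)
  then show ?thesis .
qed

lemma grad_has_derivative_0: "(grad has_derivative blinfun_apply (hess 0)) (at (0::'a::real_inner))"
proof -
  have err: "norm ((1 / norm (y - 0)) *\<^sub>R (grad y - (grad 0 + blinfun_apply (hess 0) (y - 0))))
               \<le> \<bar>mean (norm y) - f 0\<bar>" for y :: 'a
  proof (cases "y = 0")
    case False
    have "blinfun_apply (hess 0) y = f 0 *\<^sub>R blinfun_inner_left y"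
      by (simp add: hess_apply mean_def rank_one_coeff_def)
    then have "grad y - (grad 0 + blinfun_apply (hess 0) (y - 0))
                 = (mean (norm y) - f 0) *\<^sub>R blinfun_inner_left y"
      by (simp add: grad_def scaleR_diff_left)
    then have "norm ((1 / norm (y - 0)) *\<^sub>R (grad y - (grad 0 + blinfun_apply (hess 0) (y - 0))))
                 = \<bar>mean (norm y) - f 0\<bar> * (norm (blinfun_inner_left y) / norm y)"
      by simp
    also have "\<dots> \<le> \<bar>mean (norm y) - f 0\<bar> * 1"
      using norm_blinfun_inner_left_le[of y] False by (intro mult_left_mono) simp_all
    finally show ?thesis by simp
  qed simp
  have lim: "((\<lambda>y::'a. \<bar>mean (norm y) - f 0\<bar>) \<longlongrightarrow> 0) (at 0)"
    using tendsto_rabs_zero[OF LIM_zero[OF tendsto_mean_norm]] .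
  have "((\<lambda>y::'a. (1 / norm (y - 0)) *\<^sub>R (grad y - (grad 0 + blinfun_apply (hess 0) (y - 0))))
               \<longlongrightarrow> 0) (at 0)"
    by (rule Lim_null_comparison[OF always_eventually lim]) (use err in auto)
  then show ?thesis
    by (simp add: has_derivative_within blinfun.bounded_linear_right)
qed

lemma grad_has_derivative: "(grad has_derivative blinfun_apply (hess x)) (at x)"
  using grad_has_derivative_nonzero[of x] grad_has_derivative_0 by (cases "x = 0") simp_all

lemma hess_quadratic_form_bounds:
  fixes x h :: "'a::real_inner"
  defines "t \<equiv> norm x"
  shows "min (mean t) (f t) * (norm h)^2 \<le> blinfun_apply (blinfun_apply (hess x) h) h"
    and "blinfun_apply (blinfun_apply (hess x) h) h \<le> max (mean t) (f t) * (norm h)^2"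
proof -
  define c where "c = (if t = 0 then 0 else (h \<bullet> x)^2 / t^2)"
  have c_ge: "0 \<le> c" unfolding c_def by simp
  have c_le: "c \<le> (norm h)^2"
  proof (cases "t = 0")
    case False
    have "(h \<bullet> x)^2 \<le> (norm h * norm x)^2"
      using power_mono[OF Cauchy_Schwarz_ineq2[of h x], of 2] by simp
    then show ?thesis using False unfolding c_def t_def by (simp add: field_simps power_mult_distrib)
  qed (simp add: c_def)
  \<comment> \<open>The form is \<open>mean t\<close> on the complement of \<open>x\<close> and \<open>f t\<close> in the direction of \<open>x\<close>.\<close>
  have Q: "blinfun_apply (blinfun_apply (hess x) h) h = mean t * ((norm h)^2 - c) + f t * c"
  proof (cases "t = 0")
    case True
    then show ?thesis by (simp add: hess_apply_apply c_def rank_one_coeff_def power2_norm_eq_inner t_def)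
  next
    case False
    have "blinfun_apply (blinfun_apply (hess x) h) h
            = mean t * (h \<bullet> h) + (f t - mean t) / t^2 * (h \<bullet> x)^2"
      by (simp add: hess_apply_apply t_def[symmetric] rank_one_coeff_def False power2_eq_square)
    also have "\<dots> = mean t * (norm h)^2 + (f t - mean t) * c"
      using False by (simp add: c_def power2_norm_eq_inner)
    also have "\<dots> = mean t * ((norm h)^2 - c) + f t * c"
      by (simp add: algebra_simps)
    finally show ?thesis .
  qed
  have "min (mean t) (f t) * (norm h)^2
          = min (mean t) (f t) * ((norm h)^2 - c) + min (mean t) (f t) * c"
    by (simp add: algebra_simps)
  also have "\<dots> \<le> mean t * ((norm h)^2 - c) + f t * c"
    using c_ge c_le by (intro add_mono mult_right_mono) auto
  finally show "min (mean t) (f t) * (norm h)^2 \<le> blinfun_apply (blinfun_apply (hess x) h) h"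
    using Q by simp
  have "mean t * ((norm h)^2 - c) + f t * c
          \<le> max (mean t) (f t) * ((norm h)^2 - c) + max (mean t) (f t) * c"
    using c_ge c_le by (intro add_mono mult_right_mono) auto
  also have "\<dots> = max (mean t) (f t) * (norm h)^2" by (simp add: algebra_simps)
  finally show "blinfun_apply (blinfun_apply (hess x) h) h \<le> max (mean t) (f t) * (norm h)^2"
    using Q by simp
qed

lemma abs_rank_one_term_le:
  "\<bar>rank_one_coeff (norm x) * (h \<bullet> x) * (z \<bullet> x)\<bar>
     \<le> (\<bar>f (norm x)\<bar> + \<bar>mean (norm x)\<bar>) * (norm h * norm z)"
proof -
  define t where "t = norm x"
  have "\<bar>rank_one_coeff t * (h \<bullet> x) * (z \<bullet> x)\<bar> \<le> (\<bar>f t\<bar> + \<bar>mean t\<bar>) * (norm h * norm z)"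
  proof (cases "t = 0")
    case False
    have "\<bar>(h \<bullet> x) * (z \<bullet> x)\<bar> \<le> (norm h * norm x) * (norm z * norm x)"
      unfolding abs_mult by (intro mult_mono Cauchy_Schwarz_ineq2) auto
    also have "\<dots> = (norm h * norm z) * t^2" by (simp add: t_def power2_eq_square)
    finally have inner_bound: "\<bar>(h \<bullet> x) * (z \<bullet> x)\<bar> \<le> (norm h * norm z) * t^2" .
    have "\<bar>rank_one_coeff t * (h \<bullet> x) * (z \<bullet> x)\<bar>
            = \<bar>f t - mean t\<bar> / t^2 * \<bar>(h \<bullet> x) * (z \<bullet> x)\<bar>"
      using False by (simp add: rank_one_coeff_def abs_mult)
    also have "\<dots> \<le> \<bar>f t - mean t\<bar> / t^2 * ((norm h * norm z) * t^2)"
      by (rule mult_left_mono[OF inner_bound]) simp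
    also have "\<dots> = \<bar>f t - mean t\<bar> * (norm h * norm z)" using False by simp
    also have "\<dots> \<le> (\<bar>f t\<bar> + \<bar>mean t\<bar>) * (norm h * norm z)"
      by (rule mult_right_mono[OF abs_triangle_ineq4]) simp
    finally show ?thesis .
  qed (simp add: rank_one_coeff_def)
  then show ?thesis by (simp add: t_def)
qed

lemma norm_hess_le: "norm (hess x) \<le> \<bar>f (norm x)\<bar> + 2 * \<bar>mean (norm x)\<bar>"
proof -
  define t where "t = norm x"
  define K where "K = \<bar>f t\<bar> + 2 * \<bar>mean t\<bar>"
  have bilinear_bound: "norm (blinfun_apply (blinfun_apply (hess x) h) z) \<le> K * norm h * norm z" for h z
  proof -
    have "norm (blinfun_apply (blinfun_apply (hess x) h) z)
            = \<bar>mean t * (z \<bullet> h) + rank_one_coeff t * (h \<bullet> x) * (z \<bullet> x)\<bar>"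
      by (simp add: hess_apply_apply t_def)
    also have "\<dots> \<le> \<bar>mean t * (z \<bullet> h)\<bar> + \<bar>rank_one_coeff t * (h \<bullet> x) * (z \<bullet> x)\<bar>"
      by (rule abs_triangle_ineq)
    also have "\<dots> \<le> \<bar>mean t\<bar> * (norm h * norm z) + (\<bar>f t\<bar> + \<bar>mean t\<bar>) * (norm h * norm z)"
    proof (rule add_mono)
      show "\<bar>mean t * (z \<bullet> h)\<bar> \<le> \<bar>mean t\<bar> * (norm h * norm z)"
        unfolding abs_mult using Cauchy_Schwarz_ineq2[of z h]
        by (intro mult_left_mono) (simp_all add: mult.commute)
    qed (use abs_rank_one_term_le[of x h z] in \<open>simp add: t_def\<close>)
    also have "\<dots> = K * norm h * norm z" by (simp add: K_def algebra_simps)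
    finally show ?thesis .
  qed
  have K_nonneg: "0 \<le> K" by (simp add: K_def)
  have "norm (blinfun_apply (hess x) h) \<le> K * norm h" for h
    by (rule norm_blinfun_bound) (simp add: K_nonneg, rule bilinear_bound)
  then show ?thesis
    unfolding t_def[symmetric] K_def[symmetric] by (rule norm_blinfun_bound[OF K_nonneg])
qed

end

lemma powr_bounds_of_comparable:
  fixes x y m M e lo hi :: real
  assumes "0 < m" "m \<le> 1" "1 \<le> M" "m * y \<le> x" "x \<le> M * y" "1 \<le> y" "lo \<le> e" "e \<le> hi"
  shows "x powr e \<le> (M powr hi + m powr lo) * y powr hi"
    and "min (m powr hi) (M powr lo) * y powr lo \<le> x powr e"
proof -
  define q where "q = x / y"
  have y: "0 < y" using assms by auto
  have "0 < m * y" using assms y by simp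
  then have x: "0 < x" using assms by linarith
  have q: "m \<le> q" "q \<le> M" "0 < q" using assms x y by (auto simp: q_def field_simps)
  have x_powr: "x powr e = q powr e * y powr e"
    using q y by (simp add: q_def powr_mult[symmetric])
  have y_powr: "y powr e \<le> y powr hi" "y powr lo \<le> y powr e"
    using assms by (auto intro: powr_mono)
  have q_upper: "q powr e \<le> M powr hi + m powr lo"
  proof (cases "0 \<le> e")
    case True
    have "q powr e \<le> M powr e" using q True by (simp add: powr_mono2)
    also have "\<dots> \<le> M powr hi" using assms by (auto intro: powr_mono)
    finally show ?thesis by (smt (verit) powr_ge_zero)
  next
    case False
    have "q powr e \<le> m powr e" using q False assms by (simp add: powr_mono2')
    also have "\<dots> \<le> m powr lo" using assms by (simp add: powr_mono')
    finally show ?thesis by (smt (verit) powr_ge_zero)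
  qed
  have q_lower: "min (m powr hi) (M powr lo) \<le> q powr e"
  proof (cases "0 \<le> e")
    case True
    have "m powr hi \<le> m powr e" using assms True by (simp add: powr_mono')
    also have "\<dots> \<le> q powr e" using q assms True by (simp add: powr_mono2)
    finally show ?thesis by simp
  next
    case False
    have "M powr lo \<le> M powr e" using assms by (auto intro: powr_mono)
    also have "\<dots> \<le> q powr e" using q False assms by (simp add: powr_mono2')
    finally show ?thesis by simp
  qed
  show "x powr e \<le> (M powr hi + m powr lo) * y powr hi"
    unfolding x_powr using q_upper y_powr by (meson mult_mono order_trans powr_ge_zero add_nonneg_nonneg)
  show "min (m powr hi) (M powr lo) * y powr lo \<le> x powr e"
    unfolding x_powr using q_lower y_powr by (smt (verit) mult_mono powr_ge_zero)
qed

lemma integral_one_plus_powr_le: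
  fixes q t :: real
  assumes q: "1 < q" and t: "0 \<le> t"
  shows "integral {0..t} (\<lambda>r. (1 + r) powr (q - 2)) \<le> max 1 (1 / (q - 1)) * t * (1 + t) powr (q - 2)"
proof (cases "2 \<le> q")
  case True
  have "(\<lambda>r. (1 + r) powr (q - 2)) integrable_on {0..t}"
    by (intro integrable_continuous_interval continuous_intros) auto
  then have "integral {0..t} (\<lambda>r. (1 + r) powr (q - 2)) \<le> (t - 0) * (1 + t) powr (q - 2)"
    by (rule integral_le_const_real[OF t]) (use True in \<open>auto intro: powr_mono2\<close>)
  also have "\<dots> \<le> max 1 (1 / (q - 1)) * t * (1 + t) powr (q - 2)"
    using mult_right_mono[OF max.cobounded1[of 1 "1 / (q - 1)"], of "t * (1 + t) powr (q - 2)"] t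
    by (simp add: mult.assoc)
  finally show ?thesis .
next
  case False
  \<comment> \<open>Here the power decreases, so we integrate it exactly.\<close>
  have "((\<lambda>r. (1 + r) powr (q - 2)) has_integral
          (1 + t) powr (q - 1) / (q - 1) - (1 + 0) powr (q - 1) / (q - 1)) {0..t}"
  proof (rule fundamental_theorem_of_calculus)
    fix x assume x: "x \<in> {0..t}"
    have "((\<lambda>r. (1 + r) powr (q - 1) / (q - 1)) has_real_derivative
            (q - 1) * (1 + x) powr (q - 1 - of_nat 1) * 1 / (q - 1)) (at x)"
      by (intro DERIV_cdivide DERIV_fun_powr derivative_eq_intros) (use x in auto)
    then show "((\<lambda>r. (1 + r) powr (q - 1) / (q - 1)) has_vector_derivative (1 + x) powr (q - 2))
                 (at x within {0..t})"
      using q by (simp add: has_real_derivative_iff_has_vector_derivative[symmetric]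
          has_field_derivative_at_within)
  qed (use t in auto)
  then have "integral {0..t} (\<lambda>r. (1 + r) powr (q - 2)) = ((1 + t) powr (q - 1) - 1) / (q - 1)"
    by (simp add: integral_unique diff_divide_distrib)
  also have "\<dots> \<le> t * (1 + t) powr (q - 2) / (q - 1)"
  proof -
    have "(1 + t) powr (q - 1) = (1 + t) * (1 + t) powr (q - 2)"
      using t powr_add[of "1 + t" 1 "q - 2"] by simp
    moreover have "(1 + t) powr (q - 2) \<le> 1" using powr_mono[of "q - 2" 0 "1 + t"] t False by simp
    ultimately have "(1 + t) powr (q - 1) - 1 \<le> t * (1 + t) powr (q - 2)"
      by (simp add: algebra_simps)
    then show ?thesis using q by (simp add: divide_right_mono)
  qed
  also have "\<dots> \<le> max 1 (1 / (q - 1)) * t * (1 + t) powr (q - 2)"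
    using mult_right_mono[OF max.cobounded2[of "1 / (q - 1)" 1], of "t * (1 + t) powr (q - 2)"] t
    by (simp add: mult.assoc)
  finally show ?thesis .
qed

locale variable_exponent =
  fixes p \<mu> \<epsilon> :: real and \<rho> :: "real \<Rightarrow> real"
  assumes p_gt_1: "1 < p" and mu_gt_1: "1 < \<mu>" and eps_pos: "0 < \<epsilon>"
    and continuous_rho: "continuous_on {0..} \<rho>"
    and rho_antimono: "\<And>r s. 0 \<le> r \<Longrightarrow> r \<le> s \<Longrightarrow> \<rho> s \<le> \<rho> r"
    and rho_range: "\<And>r. 0 \<le> r \<Longrightarrow> \<rho> r \<in> {2 - \<mu>..p}"
begin

definition integrand :: "real \<Rightarrow> real" where
  "integrand r = (\<epsilon> + r) powr (\<rho> r - 2)"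

lemma continuous_on_integrand: "continuous_on {0..} integrand"
  unfolding integrand_def using continuous_rho eps_pos by (auto intro!: continuous_intros)

sublocale radial_profile integrand
  by unfold_locales (rule continuous_on_integrand)

lemma integrand_pos: "0 \<le> r \<Longrightarrow> 0 < integrand r"
  unfolding integrand_def using eps_pos by simp

lemma integrand_integrable: "0 \<le> a \<Longrightarrow> integrand integrable_on {a..b}"
  by (rule integrable_continuous_interval, rule continuous_on_subset[OF continuous_on_integrand]) auto

lemma phi_integrable: "0 \<le> a \<Longrightarrow> phi integrable_on {a..b}"
  by (rule integrable_continuous_interval, rule continuous_on_subset[OF continuous_on_phi]) auto

lemma phi_split: "0 \<le> s \<Longrightarrow> s \<le> t \<Longrightarrow> phi t = phi s + integral {s..t} integrand"
  unfolding phi_def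
  using Henstock_Kurzweil_Integration.integral_combine[where f=integrand and a=0 and c=s and b=t]
    integrand_integrable[of 0 t]
  by simp

lemma psi_split: "0 \<le> s \<Longrightarrow> s \<le> t \<Longrightarrow> psi t = psi s + integral {s..t} phi"
  unfolding psi_def
  using Henstock_Kurzweil_Integration.integral_combine[where f=phi and a=0 and c=s and b=t]
    phi_integrable[of 0 t]
  by simp

lemma integral_integrand_nonneg: "0 \<le> s \<Longrightarrow> 0 \<le> integral {s..t} integrand"
  by (rule integral_nonneg[OF integrand_integrable]) (auto intro: integrand_pos[THEN less_imp_le])

lemma phi_nonneg: "0 \<le> t \<Longrightarrow> 0 \<le> phi t"
  unfolding phi_def by (rule integral_integrand_nonneg) simp

lemma phi_mono: "0 \<le> s \<Longrightarrow> s \<le> t \<Longrightarrow> phi s \<le> phi t"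
  using phi_split[of s t] integral_integrand_nonneg[of s t] by linarith

lemma psi_nonneg: "0 \<le> t \<Longrightarrow> 0 \<le> psi t"
  unfolding psi_def by (rule integral_nonneg[OF phi_integrable]) (auto intro: phi_nonneg)

definition lower_const :: real where
  "lower_const = min (min 1 \<epsilon> powr (p - 2)) (max 1 \<epsilon> powr - \<mu>)"

definition upper_const :: real where
  "upper_const = max 1 \<epsilon> powr (p - 2) + min 1 \<epsilon> powr - \<mu>"

lemma lower_const_pos: "0 < lower_const"
  unfolding lower_const_def using eps_pos by (auto simp: min_def max_def)

lemma upper_const_pos: "0 < upper_const"
  unfolding upper_const_def using eps_pos by (simp add: add_pos_pos)

lemma integrand_bounds:
  assumes t: "0 \<le> t"
  shows "lower_const * (1 + t) powr - \<mu> \<le> integrand t"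
    and "integrand t \<le> upper_const * (1 + t) powr (p - 2)"
proof -
  have base: "0 < min 1 \<epsilon>" "min 1 \<epsilon> \<le> 1" "1 \<le> max 1 \<epsilon>"
    "min 1 \<epsilon> * (1 + t) \<le> \<epsilon> + t" "\<epsilon> + t \<le> max 1 \<epsilon> * (1 + t)" "1 \<le> 1 + t"
    using eps_pos t mult_left_le_one_le[of t \<epsilon>] mult_right_mono[of 1 \<epsilon> t]
    by (auto simp: min_def max_def algebra_simps)
  have exponent: "- \<mu> \<le> \<rho> t - 2" "\<rho> t - 2 \<le> p - 2"
    using rho_range[OF t] by auto
  show "lower_const * (1 + t) powr - \<mu> \<le> integrand t"
    unfolding integrand_def lower_const_def by (rule powr_bounds_of_comparable(2)[OF base exponent])
  show "integrand t \<le> upper_const * (1 + t) powr (p - 2)"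
    unfolding integrand_def upper_const_def by (rule powr_bounds_of_comparable(1)[OF base exponent])
qed

lemma mean_lower:
  assumes t: "0 \<le> t"
  shows "lower_const * (1 + t) powr - \<mu> \<le> mean t"
proof (cases "t = 0")
  case True
  then show ?thesis using integrand_bounds(1)[of 0] by (simp add: mean_def)
next
  case False
  have "(t - 0) * (lower_const * (1 + t) powr - \<mu>) \<le> integral {0..t} integrand"
  proof (rule integral_ge_const_real)
    fix r assume r: "r \<in> {0..t}"
    have "lower_const * (1 + t) powr - \<mu> \<le> lower_const * (1 + r) powr - \<mu>"
      using r lower_const_pos mu_gt_1 by (auto intro!: mult_left_mono powr_mono2')
    also have "\<dots> \<le> integrand r" using integrand_bounds(1) r by auto
    finally show "lower_const * (1 + t) powr - \<mu> \<le> integrand r" .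
  qed (use t integrand_integrable in auto)
  then show ?thesis using t False by (simp add: mean_def phi_def field_simps)
qed

lemma mean_pos: "0 \<le> t \<Longrightarrow> 0 < mean t"
  using mean_lower[of t] lower_const_pos by (smt (verit) powr_gt_zero mult_pos_pos)

definition mean_upper_const :: real where
  "mean_upper_const = upper_const * max 1 (1 / (p - 1))"

lemma integrand_le_mean_upper: "0 \<le> t \<Longrightarrow> integrand t \<le> mean_upper_const * (1 + t) powr (p - 2)"
  using integrand_bounds(2)[of t] upper_const_pos
  by (smt (verit) mean_upper_const_def max.cobounded1 mult_le_cancel_left1 mult_right_mono powr_ge_zero)

lemma mean_upper:
  assumes t: "0 \<le> t"
  shows "mean t \<le> mean_upper_const * (1 + t) powr (p - 2)"
proof (cases "t = 0")
  case True
  then show ?thesis using integrand_le_mean_upper[of 0] by (simp add: mean_def)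
next
  case False
  have "integral {0..t} integrand \<le> integral {0..t} (\<lambda>r. upper_const * (1 + r) powr (p - 2))"
  proof (rule integral_le)
    show "(\<lambda>r. upper_const * (1 + r) powr (p - 2)) integrable_on {0..t}"
      by (intro integrable_continuous_interval continuous_intros) auto
  qed (use integrand_integrable integrand_bounds(2) in auto)
  also have "\<dots> = upper_const * integral {0..t} (\<lambda>r. (1 + r) powr (p - 2))"
    by simp
  also have "\<dots> \<le> upper_const * (max 1 (1 / (p - 1)) * t * (1 + t) powr (p - 2))"
    using integral_one_plus_powr_le[OF p_gt_1 t] upper_const_pos by simp
  finally have "phi t \<le> mean_upper_const * t * (1 + t) powr (p - 2)"
    by (simp add: phi_def mean_upper_const_def mult.assoc)
  then show ?thesis using t False by (simp add: mean_def field_simps)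
qed

lemma mean_upper_const_pos: "0 < mean_upper_const"
  unfolding mean_upper_const_def using upper_const_pos by simp

definition doubling_const :: real where
  "doubling_const = 4 powr max 0 (p - 2)"

definition threshold :: real where
  "threshold = max 0 (1 - \<epsilon>)"

lemma doubling_const_ge_1: "1 \<le> doubling_const"
  unfolding doubling_const_def by (rule ge_one_powr_ge_zero) auto

text \<open>Beyond the threshold the base \<open>\<epsilon> + u\<close> is at least 1, so the larger exponent
  \<open>\<rho> u - 2 \<ge> \<rho> r - 2\<close> can only increase the power.\<close>
lemma integrand_doubling:
  assumes "threshold \<le> u" "u \<le> r" "r \<le> 4 * u"
  shows "integrand r \<le> doubling_const * integrand u"
proof -
  have u: "0 \<le> u" and base: "1 \<le> \<epsilon> + u" using assms unfolding threshold_def by auto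
  have r: "0 \<le> r" using u assms by simp
  define q where "q = \<rho> r - 2"
  have "(\<epsilon> + u) powr q \<le> integrand u"
    unfolding integrand_def q_def using base rho_antimono[OF u assms(2)] by (intro powr_mono) auto
  moreover have "integrand r \<le> doubling_const * (\<epsilon> + u) powr q"
  proof (cases "q \<le> 0")
    case True
    have "integrand r \<le> (\<epsilon> + u) powr q"
      unfolding integrand_def q_def[symmetric] using True assms base by (intro powr_mono2') auto
    then show ?thesis using doubling_const_ge_1
      by (smt (verit) mult_le_cancel_right1 powr_ge_zero)
  next
    case False
    have "integrand r \<le> (4 * (\<epsilon> + u)) powr q"
      unfolding integrand_def q_def[symmetric] using False assms eps_pos by (intro powr_mono2) auto
    also have "\<dots> = 4 powr q * (\<epsilon> + u) powr q" by (rule powr_mult)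
    also have "\<dots> \<le> doubling_const * (\<epsilon> + u) powr q"
      unfolding doubling_const_def q_def using rho_range[OF r] False q_def
      by (intro mult_right_mono powr_mono) auto
    finally show ?thesis .
  qed
  ultimately show ?thesis using doubling_const_ge_1 by (smt (verit) mult_left_mono)
qed

lemma integrand_le_phi_half:
  assumes "4 * threshold \<le> t" "t / 2 \<le> r" "r \<le> t"
  shows "t * integrand r \<le> 4 * doubling_const * phi (t / 2)"
proof -
  have t: "0 \<le> t" using assms threshold_def by simp
  have "(t / 2 - t / 4) * (integrand r / doubling_const) \<le> integral {t/4..t/2} integrand"
  proof (rule integral_ge_const_real)
    fix u assume "u \<in> {t/4..t/2}"
    then have "integrand r \<le> doubling_const * integrand u"
      using assms by (intro integrand_doubling) auto
    then show "integrand r / doubling_const \<le> integrand u"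
      using doubling_const_ge_1 by (simp add: field_simps)
  qed (use t integrand_integrable in auto)
  also have "\<dots> \<le> phi (t / 2)"
    using phi_split[of "t/4" "t/2"] phi_nonneg[of "t/4"] t by simp
  finally show ?thesis using doubling_const_ge_1 by (simp add: field_simps)
qed

lemma phi_doubling:
  assumes "4 * threshold \<le> t" "0 < t"
  shows "phi t \<le> (1 + 2 * doubling_const) * phi (t / 2)"
proof -
  have "integral {t/2..t} integrand \<le> (t - t / 2) * (4 * doubling_const * phi (t / 2) / t)"
  proof (rule integral_le_const_real)
    fix r assume "r \<in> {t/2..t}"
    then have "t * integrand r \<le> 4 * doubling_const * phi (t / 2)"
      using assms by (intro integrand_le_phi_half) auto
    then show "integrand r \<le> 4 * doubling_const * phi (t / 2) / t"
      using assms by (simp add: field_simps)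
  qed (use assms integrand_integrable in auto)
  also have "\<dots> = 2 * doubling_const * phi (t / 2)" using assms by (simp add: field_simps)
  finally show ?thesis using phi_split[of "t/2" t] assms by (simp add: algebra_simps)
qed

lemma psi_ge_half_phi_half:
  assumes "0 \<le> t"
  shows "t / 2 * phi (t / 2) \<le> psi t"
proof -
  have "(t - t / 2) * phi (t / 2) \<le> integral {t/2..t} phi"
    by (rule integral_ge_const_real) (use assms phi_integrable phi_mono in auto)
  then show ?thesis using psi_split[of "t/2" t] psi_nonneg[of "t/2"] assms by simp
qed

lemma integrand_mean_sq_le_psi:
  assumes "4 * threshold \<le> t" "0 < t"
  shows "(integrand t + 2 * mean t) * t^2 \<le> (16 * doubling_const + 4) * psi t"
proof -
  have "t * integrand t \<le> 4 * doubling_const * phi (t / 2)"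
    by (rule integrand_le_phi_half) (use assms in auto)
  then have integrand_part: "integrand t * t^2 \<le> 8 * doubling_const * (t / 2 * phi (t / 2))"
    using assms by (simp add: power2_eq_square field_simps mult_left_mono)
  have "t * phi t \<le> t * ((1 + 2 * doubling_const) * phi (t / 2))"
    using phi_doubling[OF assms] assms by (intro mult_left_mono) auto
  then have mean_part: "2 * mean t * t^2 \<le> (4 + 8 * doubling_const) * (t / 2 * phi (t / 2))"
    using assms by (simp add: mean_def power2_eq_square field_simps)
  have "(integrand t + 2 * mean t) * t^2 \<le> (16 * doubling_const + 4) * (t / 2 * phi (t / 2))"
    using integrand_part mean_part by (simp add: algebra_simps)
  also have "\<dots> \<le> (16 * doubling_const + 4) * psi t"
    using psi_ge_half_phi_half[of t] assms doubling_const_ge_1 by (intro mult_left_mono) auto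
  finally show ?thesis .
qed

lemma integrand_mean_sq_bounded:
  assumes "0 \<le> t" "t \<le> T"
  shows "(integrand t + 2 * mean t) * t^2 \<le> 3 * mean_upper_const * (1 + T) powr max 0 (p - 2) * T^2"
proof -
  have "(1 + t) powr (p - 2) \<le> (1 + t) powr max 0 (p - 2)"
    using assms by (intro powr_mono) auto
  also have "\<dots> \<le> (1 + T) powr max 0 (p - 2)"
    using assms by (intro powr_mono2) auto
  finally have "mean_upper_const * (1 + t) powr (p - 2) \<le> mean_upper_const * (1 + T) powr max 0 (p - 2)"
    by (rule mult_left_mono) (use mean_upper_const_pos in auto)
  then have "integrand t + 2 * mean t \<le> 3 * mean_upper_const * (1 + T) powr max 0 (p - 2)"
    using integrand_le_mean_upper[OF assms(1)] mean_upper[OF assms(1)] by linarith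
  moreover have "t^2 \<le> T^2" using assms by (intro power_mono) auto
  moreover have "0 \<le> integrand t + 2 * mean t"
    using integrand_pos[OF assms(1)] mean_pos[OF assms(1)] by simp
  ultimately show ?thesis
    by (rule mult_mono') simp
qed

lemma integrand_mean_sq_le_psi_plus_1:
  "\<exists>C. \<forall>t \<ge> 0. (integrand t + 2 * mean t) * t^2 \<le> C * (psi t + 1)"
proof -
  define T where "T = 4 * threshold"
  define C where "C = max (16 * doubling_const + 4)
                          (3 * mean_upper_const * (1 + T) powr max 0 (p - 2) * T^2)"
  have C_ge: "16 * doubling_const + 4 \<le> C"
    "3 * mean_upper_const * (1 + T) powr max 0 (p - 2) * T^2 \<le> C"
    unfolding C_def by simp_all
  have C_pos: "0 < C" using C_ge(1) doubling_const_ge_1 by linarith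
  have "(integrand t + 2 * mean t) * t^2 \<le> C * (psi t + 1)" if t: "0 \<le> t" for t
  proof (cases "T \<le> t \<and> 0 < t")
    case True
    then have "(integrand t + 2 * mean t) * t^2 \<le> (16 * doubling_const + 4) * psi t"
      by (intro integrand_mean_sq_le_psi) (auto simp: T_def)
    also have "\<dots> \<le> C * psi t" using C_ge(1) psi_nonneg[OF t] by (rule mult_right_mono)
    also have "\<dots> \<le> C * (psi t + 1)" using C_pos by (simp add: algebra_simps)
    finally show ?thesis .
  next
    case False
    have "0 \<le> T" by (simp add: T_def threshold_def)
    then have "t \<le> T" using False t by (cases "0 < t") auto
    then have "(integrand t + 2 * mean t) * t^2 \<le> 3 * mean_upper_const * (1 + T) powr max 0 (p - 2) * T^2"
      by (rule integrand_mean_sq_bounded[OF t])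
    also have "\<dots> \<le> C" by (rule C_ge(2))
    also have "\<dots> \<le> C * (psi t + 1)" using C_pos psi_nonneg[OF t] by (simp add: algebra_simps)
    finally show ?thesis .
  qed
  then show ?thesis by blast
qed

lemma hess_quadratic_form_estimate:
  fixes x h :: "'a::real_inner"
  shows "lower_const * (1 + norm x) powr - \<mu> * (norm h)^2 \<le> blinfun_apply (blinfun_apply (hess x) h) h"
    and "blinfun_apply (blinfun_apply (hess x) h) h \<le> mean_upper_const * (1 + norm x) powr (p - 2) * (norm h)^2"
proof -
  have t: "0 \<le> norm x" by simp
  have "lower_const * (1 + norm x) powr - \<mu> \<le> min (mean (norm x)) (integrand (norm x))"
    using mean_lower[OF t] integrand_bounds(1)[OF t] by simp
  from mult_right_mono[OF this zero_le_power2]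
  show "lower_const * (1 + norm x) powr - \<mu> * (norm h)^2 \<le> blinfun_apply (blinfun_apply (hess x) h) h"
    using hess_quadratic_form_bounds(1)[of x h] by (rule order_trans)
  have "max (mean (norm x)) (integrand (norm x)) \<le> mean_upper_const * (1 + norm x) powr (p - 2)"
    using mean_upper[OF t] integrand_le_mean_upper[OF t] by simp
  from mult_right_mono[OF this zero_le_power2]
  show "blinfun_apply (blinfun_apply (hess x) h) h \<le> mean_upper_const * (1 + norm x) powr (p - 2) * (norm h)^2"
    using hess_quadratic_form_bounds(2)[of x h] by (rule order_trans[rotated])
qed

lemma norm_hess_le_integrand_mean: "norm (hess x) \<le> integrand (norm x) + 2 * mean (norm x)"
  using norm_hess_le[of x] integrand_pos[of "norm x"] mean_pos[of "norm x"] by simp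

lemma Gfun_eq_psi_norm: "Gfun \<epsilon> \<rho> \<xi> = psi (norm \<xi>)"
  by (simp add: Gfun_def integrand_def[symmetric] psi_def phi_def[symmetric])

end

theorem proposition5p5:
  fixes p \<mu> \<epsilon> :: real and \<rho> :: "real \<Rightarrow> real"
  assumes "p > 1" and "\<mu> > 1" and "\<epsilon> > 0"
    and "continuous_on {0..} \<rho>"
    and "\<And>r s. 0 \<le> r \<Longrightarrow> r \<le> s \<Longrightarrow> \<rho> s \<le> \<rho> r"
    and "\<And>r. 0 \<le> r \<Longrightarrow> \<rho> r \<in> {2 - \<mu>..p}"
    and "\<rho> 0 = p"
    and "(\<rho> \<longlongrightarrow> 2 - \<mu>) at_top"
  shows "\<exists>DG :: real^2 \<Rightarrow> ((real^2) \<Rightarrow>\<^sub>L real).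
         \<exists>D2G :: real^2 \<Rightarrow> ((real^2) \<Rightarrow>\<^sub>L ((real^2) \<Rightarrow>\<^sub>L real)).
           (\<forall>\<xi>. (Gfun \<epsilon> \<rho> has_derivative blinfun_apply (DG \<xi>)) (at \<xi>)) \<and>
           (\<forall>\<xi>. (DG has_derivative blinfun_apply (D2G \<xi>)) (at \<xi>)) \<and>
           (\<exists>c5 c6. c5 > 0 \<and> c6 > 0 \<and>
              (\<forall>\<xi> \<eta>. c5 * (1 + norm \<xi>) powr (- \<mu>) * (norm \<eta>)\<^sup>2
                         \<le> blinfun_apply (blinfun_apply (D2G \<xi>) \<eta>) \<eta> \<and>
                       blinfun_apply (blinfun_apply (D2G \<xi>) \<eta>) \<eta>
                         \<le> c6 * (1 + norm \<xi>) powr (p - 2) * (norm \<eta>)\<^sup>2)) \<and>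
           (\<exists>c49. \<forall>\<xi>. norm (D2G \<xi>) * (norm \<xi>)\<^sup>2 \<le> c49 * (Gfun \<epsilon> \<rho> \<xi> + 1))"
proof -
  interpret variable_exponent p \<mu> \<epsilon> \<rho>
    using assms(1-6) by unfold_locales auto
  obtain C where C: "\<And>t. 0 \<le> t \<Longrightarrow> (integrand t + 2 * mean t) * t^2 \<le> C * (psi t + 1)"
    using integrand_mean_sq_le_psi_plus_1 by blast
  have growth: "norm (hess \<xi>) * (norm \<xi>)^2 \<le> C * (Gfun \<epsilon> \<rho> \<xi> + 1)" for \<xi> :: "real^2"
    using mult_right_mono[OF norm_hess_le_integrand_mean[of \<xi>] zero_le_power2, of "norm \<xi>"] C[of "norm \<xi>"]
    unfolding Gfun_eq_psi_norm[abs_def] by simp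
  show ?thesis
  proof (rule exI[of _ grad], rule exI[of _ hess], intro conjI)
    show "\<forall>\<xi>. (Gfun \<epsilon> \<rho> has_derivative blinfun_apply (grad \<xi>)) (at \<xi>)"
      unfolding Gfun_eq_psi_norm[abs_def] using psi_norm_has_derivative by blast
    show "\<forall>\<xi>. (grad has_derivative blinfun_apply (hess \<xi>)) (at \<xi>)"
      using grad_has_derivative by blast
  qed (use hess_quadratic_form_estimate lower_const_pos mean_upper_const_pos growth in blast)+
qed

end
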